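(* Let $G$ be any group and $f:G\to\mathbb R_{\ge0}$ a subadditive function ($f(xy)\le f(x)+f(y)$ for all $x,y$) with $f(x)=0$ iff $x=\mathrm{id}$, and suppose $f(h^{-1}gh)=f(g)$ for all $g,h\in G$. Then for any $x\le_f z$ in $G$, the map $y\mapsto xy^{-1}z$ maps the interval $[x,z]_f=\{y: x\le_f y\le_f z\}$ to itself and is a poset antiautomorphism of $[x,z]_f$.
   Context: For such $f$, $x\le_f y$ means $f(x)+f(x^{-1}y)=f(y)$; this is a partial order on $G$. *)

theory Defs
  imports Complex_Main "HOL-Algebra.Group"
begin

definition f_le :: "('a, 'b) monoid_scheme \<Rightarrow> ('a \<Rightarrow> real) \<Rightarrow> 'a \<Rightarrow> 'a \<Rightarrow> bool" where
  "f_le G f x y \<longleftrightarrow> f x + f (inv\<^bsub>G\<^esub> x \<otimes>\<^bsub>G\<^esub> y) = f y"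

definition f_interval :: "('a, 'b) monoid_scheme \<Rightarrow> ('a \<Rightarrow> real) \<Rightarrow> 'a \<Rightarrow> 'a \<Rightarrow> 'a set" where
  "f_interval G f x z = {y \<in> carrier G. f_le G f x y \<and> f_le G f y z}"

end

theory Submission
  imports Defs
begin

text \<open>Write \<open>d(a,b) = f(a\<inverse>b)\<close>. Subadditivity is the triangle inequality for \<open>d\<close>, so once
  \<open>x \<le>\<^sub>f z\<close> the interval \<open>[x,z]\<^sub>f\<close> is the set of points metrically between \<open>x\<close> and \<open>z\<close>,
  and the order inside it is read off from \<open>d\<close> alone. Conjugation invariance makes \<open>d\<close>
  bi-invariant and gives \<open>f(uv) = f(vu)\<close>, hence every map \<open>y \<mapsto> g y\<inverse> h\<close> reverses \<open>d\<close>: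
  \<open>d(g a\<inverse> h, g b\<inverse> h) = d(b,a)\<close>. Such a map exchanging \<open>x\<close> and \<open>z\<close> therefore preserves
  betweenness and reverses the order.\<close>

lemma (in group) m_inv_cancel_left [simp]:
  "\<lbrakk>x \<in> carrier G; y \<in> carrier G\<rbrakk> \<Longrightarrow> x \<otimes> (inv x \<otimes> y) = y"
  by (simp add: m_assoc[symmetric])

lemma (in group) inv_m_cancel_left [simp]:
  "\<lbrakk>x \<in> carrier G; y \<in> carrier G\<rbrakk> \<Longrightarrow> inv x \<otimes> (x \<otimes> y) = y"
  by (simp add: m_assoc[symmetric])

locale subadditive_function = group G for G (structure) and f :: "'a \<Rightarrow> real" +
  assumes subadd: "\<lbrakk>x \<in> carrier G; y \<in> carrier G\<rbrakk> \<Longrightarrow> f (x \<otimes> y) \<le> f x + f y"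
begin

definition ldist :: "'a \<Rightarrow> 'a \<Rightarrow> real"
  where "ldist a b = f (inv a \<otimes> b)"

lemma f_le_iff_ldist: "f_le G f a b \<longleftrightarrow> f a + ldist a b = f b"
  by (simp add: f_le_def ldist_def)

lemma ldist_triangle:
  assumes "a \<in> carrier G" "b \<in> carrier G" "c \<in> carrier G"
  shows "ldist a c \<le> ldist a b + ldist b c"
proof -
  have "inv a \<otimes> c = (inv a \<otimes> b) \<otimes> (inv b \<otimes> c)"
    using assms by (simp add: m_assoc)
  then show ?thesis
    unfolding ldist_def using assms subadd[of "inv a \<otimes> b" "inv b \<otimes> c"] by simp
qed

lemma f_le_ldist:
  assumes "a \<in> carrier G" "b \<in> carrier G"
  shows "f b \<le> f a + ldist a b"
  using assms subadd[of a "inv a \<otimes> b"] by (simp add: ldist_def)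

lemma ldist_left_invariant:
  assumes "g \<in> carrier G" "a \<in> carrier G" "b \<in> carrier G"
  shows "ldist (g \<otimes> a) (g \<otimes> b) = ldist a b"
  using assms by (simp add: ldist_def inv_mult_group m_assoc)

lemma mem_f_interval_iff_between:
  assumes "x \<in> carrier G" "z \<in> carrier G" "f_le G f x z"
  shows "y \<in> f_interval G f x z \<longleftrightarrow> y \<in> carrier G \<and> ldist x y + ldist y z = ldist x z"
proof (cases "y \<in> carrier G")
  case True
  have "f y \<le> f x + ldist x y" "f z \<le> f y + ldist y z"
    using f_le_ldist assms True by auto
  moreover have "ldist x z \<le> ldist x y + ldist y z"
    using ldist_triangle assms True by blast
  ultimately show ?thesis
    using assms(3) True by (auto simp: f_interval_def f_le_iff_ldist)
qed (simp add: f_interval_def)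

lemma f_le_in_f_interval_iff:
  assumes "x \<in> carrier G" "z \<in> carrier G" "f_le G f x z"
    and "a \<in> f_interval G f x z" "b \<in> f_interval G f x z"
  shows "f_le G f a b \<longleftrightarrow> ldist x a + ldist a b = ldist x b"
    and "f_le G f a b \<longleftrightarrow> ldist a b + ldist b z = ldist a z"
proof -
  have "f a = f x + ldist x a" "f b = f x + ldist x b"
    using assms(4,5) by (auto simp: f_interval_def f_le_iff_ldist)
  moreover have "ldist x a + ldist a z = ldist x z" "ldist x b + ldist b z = ldist x z"
    using assms mem_f_interval_iff_between by blast+
  ultimately show "f_le G f a b \<longleftrightarrow> ldist x a + ldist a b = ldist x b"
    and "f_le G f a b \<longleftrightarrow> ldist a b + ldist b z = ldist a z"
    by (auto simp: f_le_iff_ldist)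
qed

end

locale conj_invariant_function = subadditive_function +
  assumes conj_inv: "\<lbrakk>g \<in> carrier G; h \<in> carrier G\<rbrakk> \<Longrightarrow> f (inv h \<otimes> g \<otimes> h) = f g"
begin

lemma f_mult_commute:
  assumes "u \<in> carrier G" "v \<in> carrier G"
  shows "f (u \<otimes> v) = f (v \<otimes> u)"
proof -
  have "inv u \<otimes> (u \<otimes> v) \<otimes> u = v \<otimes> u"
    using assms by simp
  then show ?thesis
    using conj_inv[of "u \<otimes> v" u] assms by simp
qed

lemma ldist_right_invariant:
  assumes "g \<in> carrier G" "a \<in> carrier G" "b \<in> carrier G"
  shows "ldist (a \<otimes> g) (b \<otimes> g) = ldist a b"
proof -
  have "inv (a \<otimes> g) \<otimes> (b \<otimes> g) = inv g \<otimes> (inv a \<otimes> b) \<otimes> g"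
    using assms by (simp add: inv_mult_group m_assoc)
  then show ?thesis
    unfolding ldist_def using conj_inv assms by simp
qed

lemma ldist_reflect:
  assumes "g \<in> carrier G" "h \<in> carrier G" "a \<in> carrier G" "b \<in> carrier G"
  shows "ldist (g \<otimes> inv a \<otimes> h) (g \<otimes> inv b \<otimes> h) = ldist b a"
proof -
  have "ldist (g \<otimes> inv a \<otimes> h) (g \<otimes> inv b \<otimes> h) = ldist (inv a) (inv b)"
    using assms by (simp add: ldist_right_invariant ldist_left_invariant)
  also have "\<dots> = f (inv b \<otimes> a)"
    using assms by (simp add: ldist_def f_mult_commute)
  finally show ?thesis
    by (simp add: ldist_def)
qed

lemma reflect_mem_f_interval:
  assumes "x \<in> carrier G" "z \<in> carrier G" "f_le G f x z"
    and "g \<in> carrier G" "h \<in> carrier G"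
    and x_to_z: "g \<otimes> inv x \<otimes> h = z" and z_to_x: "g \<otimes> inv z \<otimes> h = x"
    and y: "y \<in> f_interval G f x z"
  shows "g \<otimes> inv y \<otimes> h \<in> f_interval G f x z"
proof -
  have yc: "y \<in> carrier G" and between: "ldist x y + ldist y z = ldist x z"
    using y assms(1-3) mem_f_interval_iff_between by auto
  have "ldist x (g \<otimes> inv y \<otimes> h) = ldist y z"
    using ldist_reflect[of g h z y] z_to_x assms yc by simp
  moreover have "ldist (g \<otimes> inv y \<otimes> h) z = ldist x y"
    using ldist_reflect[of g h y x] x_to_z assms yc by simp
  ultimately show ?thesis
    using between assms yc mem_f_interval_iff_between by simp
qed

lemma reflect_f_le_iff:
  assumes x: "x \<in> carrier G" and z: "z \<in> carrier G" and xz: "f_le G f x z"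
    and a: "a \<in> f_interval G f x z" and b: "b \<in> f_interval G f x z"
  shows "f_le G f (x \<otimes> inv b \<otimes> z) (x \<otimes> inv a \<otimes> z) \<longleftrightarrow> f_le G f a b"
proof -
  have ac: "a \<in> carrier G" and bc: "b \<in> carrier G"
    using a b by (auto simp: f_interval_def)
  have x_to_z: "x \<otimes> inv x \<otimes> z = z" and z_to_x: "x \<otimes> inv z \<otimes> z = x"
    using x z by (simp_all add: m_assoc)
  note reflect_mem = reflect_mem_f_interval[OF x z xz x z x_to_z z_to_x]
  have "f_le G f (x \<otimes> inv b \<otimes> z) (x \<otimes> inv a \<otimes> z) \<longleftrightarrow>
      ldist (x \<otimes> inv b \<otimes> z) (x \<otimes> inv a \<otimes> z) + ldist (x \<otimes> inv a \<otimes> z) z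
        = ldist (x \<otimes> inv b \<otimes> z) z"
    by (rule f_le_in_f_interval_iff(2)[OF x z xz reflect_mem[OF b] reflect_mem[OF a]])
  also have "\<dots> \<longleftrightarrow> ldist a b + ldist x a = ldist x b"
    using ldist_reflect[OF x z] x ac bc x_to_z by metis
  also have "\<dots> \<longleftrightarrow> f_le G f a b"
    using f_le_in_f_interval_iff(1)[OF x z xz a b] by linarith
  finally show ?thesis .
qed

lemma reflect_bij_betw_f_interval:
  assumes x: "x \<in> carrier G" and z: "z \<in> carrier G" and xz: "f_le G f x z"
  shows "bij_betw (\<lambda>y. x \<otimes> inv y \<otimes> z) (f_interval G f x z) (f_interval G f x z)"
proof (rule bij_betwI[where g = "\<lambda>y. z \<otimes> inv y \<otimes> x"])
  have "x \<otimes> inv x \<otimes> z = z" "x \<otimes> inv z \<otimes> z = x" "z \<otimes> inv x \<otimes> x = z" "z \<otimes> inv z \<otimes> x = x"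
    using x z by (simp_all add: m_assoc)
  then show "(\<lambda>y. x \<otimes> inv y \<otimes> z) \<in> f_interval G f x z \<rightarrow> f_interval G f x z"
    and "(\<lambda>y. z \<otimes> inv y \<otimes> x) \<in> f_interval G f x z \<rightarrow> f_interval G f x z"
    using reflect_mem_f_interval[OF x z xz] x z by auto
  show "z \<otimes> inv (x \<otimes> inv y \<otimes> z) \<otimes> x = y" "x \<otimes> inv (z \<otimes> inv y \<otimes> x) \<otimes> z = y"
    if "y \<in> f_interval G f x z" for y
    using that x z by (auto simp: f_interval_def inv_mult_group m_assoc)
qed

end

theorem mainTheorem3:
  fixes G (structure) and f :: "'a \<Rightarrow> real"
  assumes "group G"
    and nonneg: "\<And>x. x \<in> carrier G \<Longrightarrow> f x \<ge> 0"
    and subadd: "\<And>x y. x \<in> carrier G \<Longrightarrow> y \<in> carrier G \<Longrightarrow> f (x \<otimes> y) \<le> f x + f y"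
    and zero_iff: "\<And>x. x \<in> carrier G \<Longrightarrow> (f x = 0 \<longleftrightarrow> x = \<one>)"
    and conj_inv: "\<And>g h. g \<in> carrier G \<Longrightarrow> h \<in> carrier G \<Longrightarrow> f (inv h \<otimes> g \<otimes> h) = f g"
    and x: "x \<in> carrier G" and z: "z \<in> carrier G"
    and xz: "f_le G f x z"
  shows "(\<forall>y \<in> f_interval G f x z. x \<otimes> inv y \<otimes> z \<in> f_interval G f x z)
    \<and> bij_betw (\<lambda>y. x \<otimes> inv y \<otimes> z) (f_interval G f x z) (f_interval G f x z)
    \<and> (\<forall>a \<in> f_interval G f x z. \<forall>b \<in> f_interval G f x z.
          f_le G f a b \<longleftrightarrow> f_le G f (x \<otimes> inv b \<otimes> z) (x \<otimes> inv a \<otimes> z))"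
proof -
  interpret conj_invariant_function G f
    using assms by (simp add: conj_invariant_function_def conj_invariant_function_axioms_def
        subadditive_function_def subadditive_function_axioms_def)
  show ?thesis
    using reflect_bij_betw_f_interval[OF x z xz] reflect_f_le_iff[OF x z xz]
    by (auto simp: bij_betw_def)
qed

end
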